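(* Let $Q$ be a uniquely $2$-divisible commutative A-loop, and define $x\circ y = \big(x^{-1}\backslash (xy^2)\big)^{1/2}$. Then $(Q,\circ)$ is commutative if and only if $(Q,\circ)$ is isomorphic to $Q$.
   Context: A loop is a set with a binary operation and neutral element $1$ in which all left and right translations are bijections; $\mathrm{Inn}(Q)$ is the stabilizer of $1$ in the group generated by all translations. A commutative A-loop is a commutative loop all of whose inner mappings are automorphisms. $x\backslash y$ is the unique $z$ with $xz=y$, $x^{-1}=x\backslash 1$. Uniquely $2$-divisible means $x\mapsto x^2$ is a bijection; $z^{1/2}$ is the unique $w$ with $w^2=z$. *)

theory Defs
  imports Main
begin

definition loop :: "('a \<Rightarrow> 'a \<Rightarrow> 'a) \<Rightarrow> 'a \<Rightarrow> bool" where
  "loop mult e \<longleftrightarrow> (\<forall>x. mult e x = x \<and> mult x e = x)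
     \<and> (\<forall>x. bij (mult x)) \<and> (\<forall>x. bij (\<lambda>y. mult y x))"

definition ldiv :: "('a \<Rightarrow> 'a \<Rightarrow> 'a) \<Rightarrow> 'a \<Rightarrow> 'a \<Rightarrow> 'a" where
  "ldiv mult x y = (THE z. mult x z = y)"

definition linv :: "('a \<Rightarrow> 'a \<Rightarrow> 'a) \<Rightarrow> 'a \<Rightarrow> 'a \<Rightarrow> 'a" where
  "linv mult e x = ldiv mult x e"

inductive_set Mlt :: "('a \<Rightarrow> 'a \<Rightarrow> 'a) \<Rightarrow> ('a \<Rightarrow> 'a) set" for mult where
  Mlt_id: "id \<in> Mlt mult"
| Mlt_L: "f \<in> Mlt mult \<Longrightarrow> mult x \<circ> f \<in> Mlt mult"
| Mlt_R: "f \<in> Mlt mult \<Longrightarrow> (\<lambda>y. mult y x) \<circ> f \<in> Mlt mult"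
| Mlt_Linv: "f \<in> Mlt mult \<Longrightarrow> inv (mult x) \<circ> f \<in> Mlt mult"
| Mlt_Rinv: "f \<in> Mlt mult \<Longrightarrow> inv (\<lambda>y. mult y x) \<circ> f \<in> Mlt mult"

definition Inn :: "('a \<Rightarrow> 'a \<Rightarrow> 'a) \<Rightarrow> 'a \<Rightarrow> ('a \<Rightarrow> 'a) set" where
  "Inn mult e = {f \<in> Mlt mult. f e = e}"

definition automorphism :: "('a \<Rightarrow> 'a \<Rightarrow> 'a) \<Rightarrow> ('a \<Rightarrow> 'a) \<Rightarrow> bool" where
  "automorphism mult f \<longleftrightarrow> bij f \<and> (\<forall>x y. f (mult x y) = mult (f x) (f y))"

definition comm_A_loop :: "('a \<Rightarrow> 'a \<Rightarrow> 'a) \<Rightarrow> 'a \<Rightarrow> bool" where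
  "comm_A_loop mult e \<longleftrightarrow> loop mult e \<and> (\<forall>x y. mult x y = mult y x)
     \<and> (\<forall>f \<in> Inn mult e. automorphism mult f)"

definition uniquely_2_divisible :: "('a \<Rightarrow> 'a \<Rightarrow> 'a) \<Rightarrow> bool" where
  "uniquely_2_divisible mult \<longleftrightarrow> bij (\<lambda>x. mult x x)"

definition sqrt2 :: "('a \<Rightarrow> 'a \<Rightarrow> 'a) \<Rightarrow> 'a \<Rightarrow> 'a" where
  "sqrt2 mult z = (THE w. mult w w = z)"

definition circ :: "('a \<Rightarrow> 'a \<Rightarrow> 'a) \<Rightarrow> 'a \<Rightarrow> 'a \<Rightarrow> 'a \<Rightarrow> 'a" where
  "circ mult e x y = sqrt2 mult (ldiv mult (linv mult e x) (mult x (mult y y)))"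

definition magma_iso :: "('a \<Rightarrow> 'a \<Rightarrow> 'a) \<Rightarrow> ('b \<Rightarrow> 'b \<Rightarrow> 'b) \<Rightarrow> ('a \<Rightarrow> 'b) \<Rightarrow> bool" where
  "magma_iso m1 m2 f \<longleftrightarrow> bij f \<and> (\<forall>x y. f (m1 x y) = m2 (f x) (f y))"

end

theory Submission
  imports Defs
begin

text \<open>Put \<open>P x z = x\<^sup>-\<^sup>1 \<setminus> (x z)\<close>, so that \<open>(x \<circ> y)\<^sup>2 = P x (y\<^sup>2)\<close>.
  In a commutative A-loop the inner mappings \<open>L(a,b) z = (a b) \<setminus> (a (b z))\<close> are
  automorphisms. This yields the automorphic inverse property, that \<open>L x\<close> commutes with
  \<open>L x\<^sup>-\<^sup>1\<close>, and \<open>P (x\<^sup>2) = P x \<circ> P x\<close>. If \<open>\<circ>\<close> is commutative, i.e.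
  \<open>P x (y\<^sup>2) = P y (x\<^sup>2)\<close>, these identities give \<open>P c (b\<^sup>2) = (c\<^sup>-\<^sup>1 \<setminus> b)\<^sup>2\<close>.
  Symmetrising and taking square roots gives \<open>c\<^sup>-\<^sup>1 \<setminus> b = b\<^sup>-\<^sup>1 \<setminus> c\<close>, which together
  with the automorphic inverse property is the inverse property. Hence \<open>c\<^sup>-\<^sup>1 \<setminus> b = c b\<close>,
  so \<open>x \<circ> y = x y\<close> and the identity is an isomorphism. Conversely, a magma isomorphic to a
  commutative one is commutative.\<close>

lemma magma_iso_commute:
  assumes "magma_iso m1 m2 f" and "\<And>x y. m2 x y = m2 y x"
  shows "m1 x y = m1 y x"
proof -
  from assms(1) have "inj f" and hom: "\<And>x y. f (m1 x y) = m2 (f x) (f y)"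
    unfolding magma_iso_def bij_def by auto
  have "f (m1 x y) = f (m1 y x)" using hom assms(2) by metis
  with \<open>inj f\<close> show ?thesis by (rule injD)
qed

locale commutative_A_loop =
  fixes mult :: "'a \<Rightarrow> 'a \<Rightarrow> 'a" (infixl "\<cdot>" 70) and e :: 'a
  assumes comm_A_loop: "comm_A_loop mult e"
begin

abbreviation ldiv_op (infixr "\<setminus>" 70) where "x \<setminus> y \<equiv> ldiv mult x y"
abbreviation linv_op ("_\<^sup>-\<^sup>1" [1000] 1000) where "x\<^sup>-\<^sup>1 \<equiv> linv mult e x"

lemma loop: "loop mult e"
  and commute: "x \<cdot> y = y \<cdot> x"
  and Inn_automorphism: "f \<in> Inn mult e \<Longrightarrow> automorphism mult f"
  using comm_A_loop unfolding comm_A_loop_def by auto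

lemma left_unit [simp]: "e \<cdot> x = x"
  and right_unit [simp]: "x \<cdot> e = x"
  and bij_mult_left: "bij (mult x)"
  using loop unfolding loop_def by auto

lemma ldiv_eq_inv: "x \<setminus> y = inv (mult x) y"
  unfolding ldiv_def using bij_mult_left[of x]
  by (intro the_equality) (auto simp: bij_inv_eq_iff bij_is_surj surj_f_inv_f)

lemma mult_ldiv [simp]: "x \<cdot> (x \<setminus> y) = y"
  using bij_mult_left[of x] by (simp add: ldiv_eq_inv bij_is_surj surj_f_inv_f)

lemma ldiv_mult [simp]: "x \<setminus> (x \<cdot> y) = y"
  using bij_mult_left[of x] by (simp add: ldiv_eq_inv bij_is_inj)

lemma ldiv_unique: "x \<cdot> z = y \<Longrightarrow> x \<setminus> y = z"
  by auto

lemma mult_linv [simp]: "x \<cdot> x\<^sup>-\<^sup>1 = e"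
  by (simp add: linv_def)

lemma linv_unique: "x \<cdot> y = e \<Longrightarrow> x\<^sup>-\<^sup>1 = y"
  unfolding linv_def by (rule ldiv_unique)

lemma linv_linv [simp]: "x\<^sup>-\<^sup>1\<^sup>-\<^sup>1 = x"
proof -
  have "x\<^sup>-\<^sup>1 \<cdot> x = e"
    using commute mult_linv by metis
  then show ?thesis
    by (rule linv_unique)
qed

definition inner_L :: "'a \<Rightarrow> 'a \<Rightarrow> 'a \<Rightarrow> 'a" where
  "inner_L a b z = (a \<cdot> b) \<setminus> (a \<cdot> (b \<cdot> z))"

lemma inner_L_in_Inn: "inner_L a b \<in> Inn mult e"
proof -
  have "inner_L a b = inv (mult (a \<cdot> b)) \<circ> (mult a \<circ> (mult b \<circ> id))"
    by (simp add: fun_eq_iff inner_L_def ldiv_eq_inv)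
  moreover have "inv (mult (a \<cdot> b)) \<circ> (mult a \<circ> (mult b \<circ> id)) \<in> Mlt mult"
    by (rule Mlt_Linv[OF Mlt_L[OF Mlt_L[OF Mlt_id]]])
  moreover have "inner_L a b e = e"
    by (simp add: inner_L_def ldiv_unique)
  ultimately show ?thesis unfolding Inn_def by simp
qed

lemma inner_L_mult: "inner_L a b (x \<cdot> y) = inner_L a b x \<cdot> inner_L a b y"
  using Inn_automorphism[OF inner_L_in_Inn] unfolding automorphism_def by blast

lemma inner_L_linv: "inner_L a b (x\<^sup>-\<^sup>1) = (inner_L a b x)\<^sup>-\<^sup>1"
proof -
  have "inner_L a b x \<cdot> inner_L a b (x\<^sup>-\<^sup>1) = inner_L a b e"
    using inner_L_mult[of a b x "x\<^sup>-\<^sup>1"] by simp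
  also have "\<dots> = e"
    by (simp add: inner_L_def ldiv_unique)
  finally show ?thesis by (rule linv_unique[symmetric])
qed

lemma linv_mult_square: "x\<^sup>-\<^sup>1 \<cdot> (x \<cdot> x) = x"
proof -
  have "inner_L x x x = x"
    unfolding inner_L_def by (metis commute ldiv_mult)
  then have "inner_L x x (x\<^sup>-\<^sup>1) = x\<^sup>-\<^sup>1"
    by (simp add: inner_L_linv)
  then have "(x \<cdot> x) \<setminus> x = x\<^sup>-\<^sup>1"
    by (simp add: inner_L_def)
  then show ?thesis
    by (metis commute mult_ldiv)
qed

text \<open>Since \<open>x\<^sup>-\<^sup>1 x = e\<close>, the map \<open>z \<mapsto> x\<^sup>-\<^sup>1 (x z)\<close> is the inner mapping
  \<open>inner_L x\<^sup>-\<^sup>1 x\<close>, and it fixes \<open>x\<close>.\<close>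

lemma linv_mult_commute: "x\<^sup>-\<^sup>1 \<cdot> (x \<cdot> y) = x \<cdot> (x\<^sup>-\<^sup>1 \<cdot> y)"
proof -
  have L: "inner_L (x\<^sup>-\<^sup>1) x z = x\<^sup>-\<^sup>1 \<cdot> (x \<cdot> z)" for z
    unfolding inner_L_def by (metis commute mult_linv ldiv_unique left_unit)
  have "inner_L (x\<^sup>-\<^sup>1) x (x \<cdot> (x \<setminus> y)) = inner_L (x\<^sup>-\<^sup>1) x x \<cdot> inner_L (x\<^sup>-\<^sup>1) x (x \<setminus> y)"
    by (rule inner_L_mult)
  then show ?thesis
    by (simp add: L linv_mult_square)
qed

lemma linv_eq_mult_linv_ldiv: "x\<^sup>-\<^sup>1 = (x \<cdot> y)\<^sup>-\<^sup>1 \<cdot> ((x \<cdot> y) \<setminus> x)\<^sup>-\<^sup>1"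
proof -
  let ?T = "inner_L x y"
  have "?T x = x"
    unfolding inner_L_def by (metis commute ldiv_mult)
  then have "x\<^sup>-\<^sup>1 = ?T (x\<^sup>-\<^sup>1)"
    by (simp add: inner_L_linv)
  also have "\<dots> = ?T ((y \<setminus> x\<^sup>-\<^sup>1) \<cdot> y)"
    by (metis commute mult_ldiv)
  also have "\<dots> = ?T (y \<setminus> x\<^sup>-\<^sup>1) \<cdot> ?T y"
    by (rule inner_L_mult)
  also have "?T (y \<setminus> x\<^sup>-\<^sup>1) = (x \<cdot> y)\<^sup>-\<^sup>1"
    by (simp add: inner_L_def linv_def)
  also have "?T y = ((x \<cdot> y) \<setminus> x)\<^sup>-\<^sup>1"
    using inner_L_linv[of x y "y\<^sup>-\<^sup>1"] by (simp add: inner_L_def)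
  finally show ?thesis .
qed

lemma linv_mult: "(x \<cdot> y)\<^sup>-\<^sup>1 = x\<^sup>-\<^sup>1 \<cdot> y\<^sup>-\<^sup>1"
  using linv_eq_mult_linv_ldiv[of "x \<cdot> y" "(x \<cdot> y) \<setminus> x"] by simp

lemma linv_ldiv: "(x \<setminus> y)\<^sup>-\<^sup>1 = x\<^sup>-\<^sup>1 \<setminus> y\<^sup>-\<^sup>1"
  by (metis ldiv_unique linv_mult mult_ldiv)

lemma inner_L_linv_linv: "inner_L a b z = inner_L (a\<^sup>-\<^sup>1) (b\<^sup>-\<^sup>1) z"
proof -
  have "inner_L a b z = (inner_L a b (z\<^sup>-\<^sup>1))\<^sup>-\<^sup>1"
    by (simp add: inner_L_linv)
  also have "\<dots> = inner_L (a\<^sup>-\<^sup>1) (b\<^sup>-\<^sup>1) z"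
    by (simp add: inner_L_def linv_ldiv linv_mult)
  finally show ?thesis .
qed

abbreviation P :: "'a \<Rightarrow> 'a \<Rightarrow> 'a" where
  "P x z \<equiv> x\<^sup>-\<^sup>1 \<setminus> (x \<cdot> z)"

lemma P_eq_mult_ldiv: "P x y = x \<cdot> (x\<^sup>-\<^sup>1 \<setminus> y)"
  by (rule ldiv_unique) (metis linv_mult_commute mult_ldiv)

lemma P_linv_mult: "P x (x\<^sup>-\<^sup>1 \<cdot> y) = x \<cdot> y"
  by (rule ldiv_unique) (simp add: linv_mult_commute)

lemma P_linv_P: "P (x\<^sup>-\<^sup>1) (P x z) = z"
  by simp

lemma P_mult: "P (x \<cdot> y) z = x \<cdot> P y (x\<^sup>-\<^sup>1 \<setminus> z)"
proof -
  define t where "t = y\<^sup>-\<^sup>1 \<setminus> (x\<^sup>-\<^sup>1 \<setminus> z)"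
  have "inner_L x y t = inner_L (x\<^sup>-\<^sup>1) (y\<^sup>-\<^sup>1) t"
    by (rule inner_L_linv_linv)
  then have "(x \<cdot> y) \<setminus> (x \<cdot> (y \<cdot> t)) = (x \<cdot> y)\<^sup>-\<^sup>1 \<setminus> z"
    by (simp add: inner_L_def t_def linv_mult)
  then have "x \<cdot> (y \<cdot> t) = P (x \<cdot> y) z"
    by (metis P_eq_mult_ldiv mult_ldiv)
  then show ?thesis
    by (simp add: t_def P_eq_mult_ldiv)
qed

lemma P_square: "P (x \<cdot> x) z = P x (P x z)"
  by (metis P_mult P_eq_mult_ldiv)

end

locale uniquely_2_divisible_commutative_A_loop = commutative_A_loop +
  assumes uniquely_2_divisible: "uniquely_2_divisible mult"
begin

lemma bij_square: "bij (\<lambda>x. x \<cdot> x)"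
  using uniquely_2_divisible unfolding uniquely_2_divisible_def .

lemma square_inv_square: "inv (\<lambda>x. x \<cdot> x) w \<cdot> inv (\<lambda>x. x \<cdot> x) w = w"
  using surj_f_inv_f[OF bij_is_surj[OF bij_square]] by simp

lemma sqrt2_eq_inv: "sqrt2 mult w = inv (\<lambda>x. x \<cdot> x) w"
  unfolding sqrt2_def using bij_square square_inv_square
  by (intro the_equality) (auto simp: bij_inv_eq_iff)

lemma square_sqrt2 [simp]: "sqrt2 mult w \<cdot> sqrt2 mult w = w"
  by (simp add: sqrt2_eq_inv square_inv_square)

lemma sqrt2_square [simp]: "sqrt2 mult (x \<cdot> x) = x"
  using inv_f_f[OF bij_is_inj[OF bij_square], of x] by (simp add: sqrt2_eq_inv)

lemma square_inj: "x \<cdot> x = y \<cdot> y \<Longrightarrow> x = y"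
  by (metis sqrt2_square)

lemma circ_eq: "circ mult e x y = sqrt2 mult (P x (y \<cdot> y))"
  unfolding circ_def ..

context
  assumes P_sym: "\<And>x y. P x (y \<cdot> y) = P y (x \<cdot> x)"
begin

lemma P_square_eq_square_ldiv: "P c (b \<cdot> b) = (c\<^sup>-\<^sup>1 \<setminus> b) \<cdot> (c\<^sup>-\<^sup>1 \<setminus> b)"
proof -
  define u where "u = c\<^sup>-\<^sup>1 \<setminus> b"
  define r where "r = sqrt2 mult b"
  have b: "b = c\<^sup>-\<^sup>1 \<cdot> u" and r: "r \<cdot> r = b"
    by (simp_all add: u_def r_def)
  have b_linv: "u\<^sup>-\<^sup>1 \<cdot> c = r\<^sup>-\<^sup>1 \<cdot> r\<^sup>-\<^sup>1"
    by (metis b r commute linv_linv linv_mult)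
  have "P c (b \<cdot> b) = P (r \<cdot> r) (c \<cdot> c)"
    using P_sym[of c b] r by simp
  also have "\<dots> = P r (P r (c \<cdot> c))"
    by (rule P_square)
  also have "P r (c \<cdot> c) = P c b"
    using P_sym[of r c] r by simp
  also have "P c b = P u (u\<^sup>-\<^sup>1 \<cdot> c)"
    unfolding b P_linv_mult by (rule commute)
  also have "\<dots> = P (r\<^sup>-\<^sup>1) (u \<cdot> u)"
    unfolding b_linv by (rule P_sym)
  also have "P r \<dots> = u \<cdot> u"
    using P_linv_P[of "r\<^sup>-\<^sup>1"] by simp
  finally show ?thesis
    by (simp add: u_def)
qed

lemma ldiv_linv_symmetric: "c\<^sup>-\<^sup>1 \<setminus> b = b\<^sup>-\<^sup>1 \<setminus> c"
proof (rule square_inj)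
  have "(c\<^sup>-\<^sup>1 \<setminus> b) \<cdot> (c\<^sup>-\<^sup>1 \<setminus> b) = P c (b \<cdot> b)"
    by (rule P_square_eq_square_ldiv[symmetric])
  also have "\<dots> = P b (c \<cdot> c)"
    by (rule P_sym)
  also have "\<dots> = (b\<^sup>-\<^sup>1 \<setminus> c) \<cdot> (b\<^sup>-\<^sup>1 \<setminus> c)"
    by (rule P_square_eq_square_ldiv)
  finally show "(c\<^sup>-\<^sup>1 \<setminus> b) \<cdot> (c\<^sup>-\<^sup>1 \<setminus> b) = (b\<^sup>-\<^sup>1 \<setminus> c) \<cdot> (b\<^sup>-\<^sup>1 \<setminus> c)" .
qed

lemma inverse_property: "x\<^sup>-\<^sup>1 \<cdot> (x \<cdot> y) = y"
proof -
  have "(x\<^sup>-\<^sup>1 \<cdot> y\<^sup>-\<^sup>1) \<cdot> y = x\<^sup>-\<^sup>1" for x y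
  proof -
    have "(x \<cdot> y)\<^sup>-\<^sup>1 \<setminus> x\<^sup>-\<^sup>1 = y"
      using ldiv_linv_symmetric[of "x\<^sup>-\<^sup>1" "x \<cdot> y"] by simp
    then have "(x \<cdot> y)\<^sup>-\<^sup>1 \<cdot> y = x\<^sup>-\<^sup>1"
      using mult_ldiv[of "(x \<cdot> y)\<^sup>-\<^sup>1" "x\<^sup>-\<^sup>1"] by simp
    then show ?thesis
      by (simp add: linv_mult)
  qed
  from this[of "y\<^sup>-\<^sup>1" "x\<^sup>-\<^sup>1"] show ?thesis
    by (simp add: commute)
qed

lemma P_square_eq_square_mult: "P x (y \<cdot> y) = (x \<cdot> y) \<cdot> (x \<cdot> y)"
proof -
  have "P x (y \<cdot> y) = (x\<^sup>-\<^sup>1 \<setminus> y) \<cdot> (x\<^sup>-\<^sup>1 \<setminus> y)"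
    by (rule P_square_eq_square_ldiv)
  also have "x\<^sup>-\<^sup>1 \<setminus> y = x \<cdot> y"
    by (rule ldiv_unique) (rule inverse_property)
  finally show ?thesis .
qed

end

lemma circ_eq_mult_if_commutative:
  assumes "\<forall>x y. circ mult e x y = circ mult e y x"
  shows "circ mult e x y = x \<cdot> y"
proof -
  have P_sym: "P x (y \<cdot> y) = P y (x \<cdot> x)" for x y
  proof -
    have "sqrt2 mult (P x (y \<cdot> y)) = sqrt2 mult (P y (x \<cdot> x))"
      using assms by (simp add: circ_eq)
    from arg_cong[OF this, of "\<lambda>w. w \<cdot> w"] show ?thesis
      by simp
  qed
  show ?thesis
    by (simp add: circ_eq P_square_eq_square_mult[OF P_sym])
qed

end

theorem corollary3p11:
  fixes mult :: "'a \<Rightarrow> 'a \<Rightarrow> 'a" and e :: 'a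
  assumes "comm_A_loop mult e"
    and "uniquely_2_divisible mult"
  shows "(\<forall>x y. circ mult e x y = circ mult e y x)
     \<longleftrightarrow> (\<exists>f. magma_iso (circ mult e) mult f)"
proof -
  interpret uniquely_2_divisible_commutative_A_loop mult e
    using assms by unfold_locales
  show ?thesis
  proof
    assume "\<forall>x y. circ mult e x y = circ mult e y x"
    from circ_eq_mult_if_commutative[OF this] have "magma_iso (circ mult e) mult id"
      unfolding magma_iso_def by simp
    then show "\<exists>f. magma_iso (circ mult e) mult f" by blast
  next
    assume "\<exists>f. magma_iso (circ mult e) mult f"
    then obtain f where "magma_iso (circ mult e) mult f" ..
    from magma_iso_commute[OF this commute]
    show "\<forall>x y. circ mult e x y = circ mult e y x" by blast
  qed
qed

end
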